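(* Let $E$ be a finite nonempty set, $f:2^E\to\mathbb{N}$ an integral polymatroid rank function, $d\in\mathbb{N}$, and let $C_e:\mathbb{N}\times\mathbb{N}\to\mathbb{R}_+$, $e\in E$, be regular functions. Then for every $\vec t\in\mathbb{N}^E$, every optimal solution $\vec x^*(\vec t,d)$ of $P(\vec t,d)$ and every $\vec t'\in\mathbb{N}^E$ with $\|\vec t-\vec t'\|=1$, there is an optimal solution $\vec x^*(\vec t',d)$ of $P(\vec t',d)$ with $\|\vec x^*(\vec t,d)-\vec x^*(\vec t',d)\|\le 2$.
   Context: $\mathbb{N}=\{0,1,2,\dots\}$. A set function $f:2^E\to\mathbb{N}$ is an integral polymatroid rank function if $f(\emptyset)=0$, $f$ is monotone ($f(U)\le f(V)$ for $U\subseteq V$) and submodular. For $\vec x\in\mathbb{N}^E$, $x(U)=\sum_{e\in U}x_e$; $\mathbb{B}_f(d)=\{\vec x\in\mathbb{N}^E: x(U)\le f(U)\ \forall U\subseteq E,\ x(E)=d\}$. $P(\vec t,d)$: minimize $\sum_{e\in E}C_e(x_e;t_e)$ subject to $\vec x\in\mathbb{B}_f(d)$. $\|\cdot\|$ is the $L_1$-norm. For $C:\mathbb{N}\times\mathbb{N}\to\mathbb{R}$, $C^-(x;t)=C(x;t)-C(x-1;t)$ for $x\ge1$; $C$ is regular if $C^-(x;t)\le C^-(x;t+1)$ and $C^-(x;t+1)\le C^-(x+1;t)$ for all $x\ge1$, $t\in\mathbb{N}$. *)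

theory Defs
  imports Complex_Main
begin

definition polymatroid_rank :: "'a set \<Rightarrow> ('a set \<Rightarrow> nat) \<Rightarrow> bool" where
  "polymatroid_rank E f \<longleftrightarrow>
     f {} = 0 \<and>
     (\<forall>U V. U \<subseteq> V \<and> V \<subseteq> E \<longrightarrow> f U \<le> f V) \<and>
     (\<forall>U V. U \<subseteq> E \<and> V \<subseteq> E \<longrightarrow> f (U \<union> V) + f (U \<inter> V) \<le> f U + f V)"

text \<open>Vectors in N^E are represented as functions vanishing outside E.\<close>
definition natvecs :: "'a set \<Rightarrow> ('a \<Rightarrow> nat) set" where
  "natvecs E = {x. \<forall>e. e \<notin> E \<longrightarrow> x e = 0}"

definition base_set :: "'a set \<Rightarrow> ('a set \<Rightarrow> nat) \<Rightarrow> nat \<Rightarrow> ('a \<Rightarrow> nat) set" where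
  "base_set E f d = {x \<in> natvecs E. (\<forall>U. U \<subseteq> E \<longrightarrow> (\<Sum>e\<in>U. x e) \<le> f U) \<and> (\<Sum>e\<in>E. x e) = d}"

definition total_cost :: "'a set \<Rightarrow> ('a \<Rightarrow> nat \<Rightarrow> nat \<Rightarrow> real) \<Rightarrow> ('a \<Rightarrow> nat) \<Rightarrow> ('a \<Rightarrow> nat) \<Rightarrow> real" where
  "total_cost E C t x = (\<Sum>e\<in>E. C e (x e) (t e))"

definition optimal_sol :: "'a set \<Rightarrow> ('a set \<Rightarrow> nat) \<Rightarrow> ('a \<Rightarrow> nat \<Rightarrow> nat \<Rightarrow> real) \<Rightarrow> ('a \<Rightarrow> nat) \<Rightarrow> nat \<Rightarrow> ('a \<Rightarrow> nat) \<Rightarrow> bool" where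
  "optimal_sol E f C t d x \<longleftrightarrow> x \<in> base_set E f d \<and>
     (\<forall>y \<in> base_set E f d. total_cost E C t x \<le> total_cost E C t y)"

text \<open>Marginal cost C^-(x;t) = C(x;t) - C(x-1;t), used for x \<ge> 1.\<close>
definition marg :: "(nat \<Rightarrow> nat \<Rightarrow> real) \<Rightarrow> nat \<Rightarrow> nat \<Rightarrow> real" where
  "marg C x t = C x t - C (x - 1) t"

definition regular :: "(nat \<Rightarrow> nat \<Rightarrow> real) \<Rightarrow> bool" where
  "regular C \<longleftrightarrow> (\<forall>x t. x \<ge> 1 \<longrightarrow> marg C x t \<le> marg C x (t + 1) \<and> marg C x (t + 1) \<le> marg C (x + 1) t)"

definition l1dist :: "'a set \<Rightarrow> ('a \<Rightarrow> nat) \<Rightarrow> ('a \<Rightarrow> nat) \<Rightarrow> nat" where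
  "l1dist E x y = (\<Sum>e\<in>E. nat \<bar>int (x e) - int (y e)\<bar>)"

end

theory Submission
  imports Defs
begin

text \<open>
  Let \<open>y\<close> be an optimal solution of \<open>P(t',d)\<close> closest to \<open>x\<close> in \<open>L\<^sub>1\<close>. If \<open>\<parallel>x - y\<parallel> > 2\<close>,
  the surplus of \<open>x\<close> over \<open>y\<close> has size at least 2, so some surplus coordinate \<open>e\<close> of \<open>x\<close>
  avoids the single coordinate where \<open>t\<close> and \<open>t'\<close> differ (or has surplus at least 2 there).
  The strong exchange property of polymatroid bases yields \<open>g\<close> with \<open>x\<^sub>g < y\<^sub>g\<close> such that
  moving a unit from \<open>e\<close> to \<open>g\<close> in \<open>x\<close>, and from \<open>g\<close> to \<open>e\<close> in \<open>y\<close>, stays feasible.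
  Optimality of \<open>x\<close> makes the first move unprofitable at \<open>t\<close>; regularity transfers this
  marginal comparison to \<open>t'\<close>, so the second move does not increase the cost of \<open>y\<close>.
  It yields an optimal solution of \<open>P(t',d)\<close> strictly closer to \<open>x\<close>, a contradiction.
\<close>

definition transfer :: "('a \<Rightarrow> nat) \<Rightarrow> 'a \<Rightarrow> 'a \<Rightarrow> 'a \<Rightarrow> nat" where
  "transfer x e g = x(e := x e - 1, g := x g + 1)"

definition tight :: "'a set \<Rightarrow> ('a set \<Rightarrow> nat) \<Rightarrow> ('a \<Rightarrow> nat) \<Rightarrow> 'a set \<Rightarrow> bool" where
  "tight E f x U \<longleftrightarrow> U \<subseteq> E \<and> sum x U = f U"

lemma sum_comp_fun_upd:
  fixes F :: "'a \<Rightarrow> 'b \<Rightarrow> 'c::comm_monoid_add"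
  assumes "finite U"
  shows "(\<Sum>h\<in>U. F h ((x(k := v)) h)) + (if k \<in> U then F k (x k) else 0)
       = (\<Sum>h\<in>U. F h (x h)) + (if k \<in> U then F k v else 0)"
proof (cases "k \<in> U")
  case True
  have "(\<Sum>h\<in>U-{k}. F h ((x(k := v)) h)) = (\<Sum>h\<in>U-{k}. F h (x h))"
    by (rule sum.cong) auto
  then show ?thesis
    using assms True by (simp add: sum.remove ac_simps)
next
  case False
  have "(\<Sum>h\<in>U. F h ((x(k := v)) h)) = (\<Sum>h\<in>U. F h (x h))"
    by (rule sum.cong) (use False in auto)
  then show ?thesis using False by simp
qed

subsection \<open>Tight sets and the strong exchange property\<close>

lemma sum_transfer:
  assumes "finite U" "e \<noteq> g" "1 \<le> x e"
  shows "sum (transfer x e g) U + of_bool (e \<in> U) = sum x U + of_bool (g \<in> U)"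
proof -
  have "sum (x(e := x e - 1)) U + (if e \<in> U then x e else 0)
      = sum x U + (if e \<in> U then x e - 1 else 0)"
    using sum_comp_fun_upd[OF assms(1), of "\<lambda>h z. z" x e "x e - 1"] by simp
  moreover have "sum (transfer x e g) U + (if g \<in> U then (x(e := x e - 1)) g else 0)
      = sum (x(e := x e - 1)) U + (if g \<in> U then x g + 1 else 0)"
    using sum_comp_fun_upd[OF assms(1), of "\<lambda>h z. z" "x(e := x e - 1)" g "x g + 1"]
    by (simp add: transfer_def)
  ultimately show ?thesis
    using assms(2,3) by (auto split: if_splits)
qed

lemma transfer_in_natvecs:
  "x \<in> natvecs E \<Longrightarrow> e \<in> E \<Longrightarrow> g \<in> E \<Longrightarrow> transfer x e g \<in> natvecs E"
  by (auto simp: natvecs_def transfer_def)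

lemma transfer_notin_base_set_obtains_tight:
  assumes fin: "finite E" and x: "x \<in> base_set E f d"
    and "e \<in> E" "g \<in> E" "e \<noteq> g" "1 \<le> x e"
    and out: "transfer x e g \<notin> base_set E f d"
  obtains U where "tight E f x U" "g \<in> U" "e \<notin> U"
proof -
  have sum_U: "sum (transfer x e g) U + of_bool (e \<in> U) = sum x U + of_bool (g \<in> U)"
    if "U \<subseteq> E" for U
    using sum_transfer[OF finite_subset[OF that fin]] assms(5,6) .
  have "transfer x e g \<in> natvecs E"
    using x assms(3,4) by (simp add: base_set_def transfer_in_natvecs)
  moreover have "sum (transfer x e g) E = d"
    using sum_U[of E] x assms(3,4) by (simp add: base_set_def)
  ultimately obtain U where U: "U \<subseteq> E" "\<not> sum (transfer x e g) U \<le> f U"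
    using out unfolding base_set_def by blast
  moreover have "sum x U \<le> f U"
    using x U(1) by (simp add: base_set_def)
  ultimately have "sum x U = f U" "g \<in> U" "e \<notin> U"
    using sum_U[OF U(1)] by (auto simp: of_bool_def split: if_splits)
  then show thesis
    using that U(1) by (simp add: tight_def)
qed

lemma tight_Un_Int:
  assumes fin: "finite E" and pm: "polymatroid_rank E f" and x: "x \<in> base_set E f d"
    and U: "tight E f x U" and V: "tight E f x V"
  shows "tight E f x (U \<union> V)" "tight E f x (U \<inter> V)"
proof -
  have le: "sum x W \<le> f W" if "W \<subseteq> E" for W
    using x that by (simp add: base_set_def)
  have "U \<subseteq> E" "V \<subseteq> E" "sum x U = f U" "sum x V = f V"
    using U V by (auto simp: tight_def)
  moreover have "finite U" "finite V"
    using \<open>U \<subseteq> E\<close> \<open>V \<subseteq> E\<close> fin finite_subset by auto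
  then have "sum x (U \<union> V) + sum x (U \<inter> V) = sum x U + sum x V"
    by (rule sum.union_inter)
  moreover have "f (U \<union> V) + f (U \<inter> V) \<le> f U + f V"
    using pm \<open>U \<subseteq> E\<close> \<open>V \<subseteq> E\<close> unfolding polymatroid_rank_def by blast
  moreover have "sum x (U \<union> V) \<le> f (U \<union> V)" "sum x (U \<inter> V) \<le> f (U \<inter> V)"
    using le[of "U \<union> V"] le[of "U \<inter> V"] \<open>U \<subseteq> E\<close> \<open>V \<subseteq> E\<close> by auto
  ultimately show "tight E f x (U \<union> V)" "tight E f x (U \<inter> V)"
    unfolding tight_def by auto
qed

lemma tight_Union:
  assumes "finite E" "polymatroid_rank E f" "x \<in> base_set E f d"
    and "finite F" "\<forall>U\<in>F. tight E f x U"
  shows "tight E f x (\<Union>F)"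
  using assms(4,5)
proof (induction F rule: finite_induct)
  case empty
  then show ?case
    using assms(2) by (simp add: tight_def polymatroid_rank_def)
next
  case (insert U F)
  then show ?case
    using tight_Un_Int(1)[OF assms(1-3)] by simp
qed

lemma tight_Inter:
  assumes "finite E" "polymatroid_rank E f" "x \<in> base_set E f d"
    and "finite F" "F \<noteq> {}" "\<forall>V\<in>F. tight E f x V"
  shows "tight E f x (\<Inter>F)"
  using assms(4-6)
proof (induction F rule: finite_ne_induct)
  case (insert V F)
  then show ?case
    using tight_Un_Int(2)[OF assms(1-3)] by simp
qed simp

lemma sum_diff_le_of_tight:
  assumes fin: "finite E" and pm: "polymatroid_rank E f"
    and x: "x \<in> base_set E f d" and y: "y \<in> base_set E f d"
    and T: "tight E f x T" and S: "S \<subseteq> E" "tight E f y S \<or> S = E"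
  shows "sum x (S - T) \<le> sum y (S - T)"
proof -
  have TE: "T \<subseteq> E" "sum x T = f T"
    using T by (auto simp: tight_def)
  have finST: "finite S" "finite T"
    using S(1) TE(1) fin finite_subset by auto
  have sub: "S \<union> T \<subseteq> E" "S \<inter> T \<subseteq> E"
    using S(1) TE(1) by auto
  from S(2) show ?thesis
  proof
    assume "tight E f y S"
    then have "sum y S = f S"
      by (simp add: tight_def)
    moreover have "sum x (S \<union> T) = sum x (S - T) + sum x T"
      using sum.Int_Diff[of "S \<union> T" x T] finST by (simp add: Un_Diff)
    moreover have "sum y S = sum y (S - T) + sum y (S \<inter> T)"
      using sum.Int_Diff[OF finST(1), of y T] by simp
    moreover have "sum x (S \<union> T) \<le> f (S \<union> T)" "sum y (S \<inter> T) \<le> f (S \<inter> T)"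
      using x y sub by (simp_all add: base_set_def)
    moreover have "f (S \<union> T) + f (S \<inter> T) \<le> f S + f T"
      using pm S(1) TE(1) unfolding polymatroid_rank_def by blast
    ultimately show ?thesis
      using TE(2) by linarith
  next
    assume "S = E"
    then have "sum x (S - T) + sum x T = d" "sum y (S - T) + sum y T = d"
      using x y TE(1) sum.Int_Diff[OF fin, of x T] sum.Int_Diff[OF fin, of y T]
      by (auto simp: base_set_def Int_absorb1)
    moreover have "sum y T \<le> f T"
      using y TE(1) by (simp add: base_set_def)
    ultimately show ?thesis
      using TE(2) by linarith
  qed
qed

text \<open>
  Every coordinate \<open>h\<close> with \<open>x\<^sub>h < y\<^sub>h\<close> that blocks the exchange lies in an \<open>x\<close>-tight set
  avoiding \<open>e\<close> or outside a \<open>y\<close>-tight set containing \<open>e\<close>. Taking the largest such \<open>x\<close>-tight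
  set \<open>T\<close> and the smallest such \<open>y\<close>-tight set \<open>S\<close>, we get \<open>y \<le> x\<close> on \<open>S - T \<ni> e\<close> with strict
  inequality at \<open>e\<close>, against submodularity.
\<close>
lemma strong_exchange:
  assumes fin: "finite E" and pm: "polymatroid_rank E f"
    and x: "x \<in> base_set E f d" and y: "y \<in> base_set E f d"
    and e: "e \<in> E" and less: "y e < x e"
  shows "\<exists>g\<in>E. x g < y g \<and> transfer x e g \<in> base_set E f d \<and> transfer y g e \<in> base_set E f d"
proof (rule ccontr)
  assume blocked: "\<not> ?thesis"
  define T where "T = \<Union>{U. tight E f x U \<and> e \<notin> U}"
  define S where "S = E \<inter> \<Inter>{V. tight E f y V \<and> e \<in> V}"
  have finite_tight: "finite {U. tight E f z U \<and> P U}" for z P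
    by (rule finite_subset[of _ "Pow E"]) (auto simp: tight_def fin)
  have T: "tight E f x T" "e \<notin> T"
    using tight_Union[OF fin pm x finite_tight] by (auto simp: T_def)
  have S: "S \<subseteq> E" "tight E f y S \<or> S = E" "e \<in> S"
  proof -
    show "S \<subseteq> E" "e \<in> S"
      using e by (auto simp: S_def)
    show "tight E f y S \<or> S = E"
    proof (cases "{V. tight E f y V \<and> e \<in> V} = {}")
      case False
      then have "S = \<Inter>{V. tight E f y V \<and> e \<in> V}"
        by (auto simp: S_def tight_def)
      then show ?thesis
        using tight_Inter[OF fin pm y finite_tight False] by simp
    next
      case True
      then show ?thesis
        unfolding S_def True by simp
    qed
  qed
  have "y h \<le> x h" if h: "h \<in> S - T" for h
  proof (rule ccontr)
    assume "\<not> y h \<le> x h"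
    moreover have "h \<in> E" "h \<noteq> e"
      using h S(1) less \<open>\<not> y h \<le> x h\<close> by auto
    ultimately have "transfer x e h \<notin> base_set E f d \<or> transfer y h e \<notin> base_set E f d"
      using blocked by auto
    then show False
    proof
      assume "transfer x e h \<notin> base_set E f d"
      then obtain U where "tight E f x U" "h \<in> U" "e \<notin> U"
        using transfer_notin_base_set_obtains_tight[OF fin x e \<open>h \<in> E\<close>] \<open>h \<noteq> e\<close> less
        by auto
      then show False
        using h by (auto simp: T_def)
    next
      assume "transfer y h e \<notin> base_set E f d"
      then obtain V where "tight E f y V" "e \<in> V" "h \<notin> V"
        using transfer_notin_base_set_obtains_tight[OF fin y \<open>h \<in> E\<close> e] \<open>h \<noteq> e\<close> \<open>\<not> y h \<le> x h\<close>
        by auto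
      then show False
        using h by (auto simp: S_def)
    qed
  qed
  moreover have "finite (S - T)"
    using fin S(1) by (meson finite_Diff finite_subset)
  ultimately have "sum y (S - T) < sum x (S - T)"
    using S(3) T(2) less by (intro sum_strict_mono_ex1) auto
  then show False
    using sum_diff_le_of_tight[OF fin pm x y T(1) S(1,2)] by simp
qed

lemma marg_mono_time:
  assumes "regular C" "1 \<le> a" "u \<le> v"
  shows "marg C a u \<le> marg C a v"
  using assms(3)
proof (induction v rule: dec_induct)
  case (step v)
  then show ?case
    using assms(1,2) unfolding regular_def by (metis Suc_eq_plus1 order_trans)
qed simp

text \<open>
  The marginal cost is monotone along the order generated by raising \<open>t\<close> and by trading
  one unit of \<open>t\<close> for one unit of \<open>x\<close>.
\<close>
lemma marg_mono:
  assumes reg: "regular C" and "1 \<le> a" "a \<le> b" "a + u \<le> b + v"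
  shows "marg C a u \<le> marg C b v"
  using assms(3,4)
proof (induction b arbitrary: v rule: dec_induct)
  case base
  then show ?case
    using marg_mono_time[OF reg \<open>1 \<le> a\<close>] by simp
next
  case (step b)
  then have "marg C a u \<le> marg C b (v + 1)"
    by simp
  also have "\<dots> \<le> marg C (Suc b) v"
    using reg step(1) \<open>1 \<le> a\<close> unfolding regular_def by simp
  finally show ?case .
qed

lemma total_cost_transfer:
  assumes fin: "finite E" and "e \<in> E" "g \<in> E" "e \<noteq> g" "1 \<le> x e"
  shows "total_cost E C t (transfer x e g)
       = total_cost E C t x - marg (C e) (x e) (t e) + marg (C g) (x g + 1) (t g)"
proof -
  let ?F = "\<lambda>h z. C h z (t h)"
  have "(\<Sum>h\<in>E. ?F h ((x(e := x e - 1)) h)) + ?F e (x e) = (\<Sum>h\<in>E. ?F h (x h)) + ?F e (x e - 1)"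
    using sum_comp_fun_upd[OF fin, of ?F x e "x e - 1"] assms(2) by simp
  moreover have "(\<Sum>h\<in>E. ?F h (transfer x e g h)) + ?F g (x g)
      = (\<Sum>h\<in>E. ?F h ((x(e := x e - 1)) h)) + ?F g (x g + 1)"
    using sum_comp_fun_upd[OF fin, of ?F "x(e := x e - 1)" g "x g + 1"] assms(3,4)
    by (simp add: transfer_def)
  ultimately show ?thesis
    using assms(5) by (simp add: total_cost_def marg_def)
qed

lemma optimal_transfer:
  assumes fin: "finite E" and "e \<in> E" "g \<in> E"
    and reg: "regular (C e)" "regular (C g)"
    and ox: "optimal_sol E f C t d x" and oy: "optimal_sol E f C t' d y"
    and less: "y e < x e" "x g < y g"
    and xB: "transfer x e g \<in> base_set E f d" and yB: "transfer y g e \<in> base_set E f d"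
    and shift: "y e + 1 + t' e \<le> x e + t e" "x g + 1 + t g \<le> y g + t' g"
  shows "optimal_sol E f C t' d (transfer y g e)"
proof -
  have "e \<noteq> g"
    using less by auto
  have "marg (C e) (y e + 1) (t' e) \<le> marg (C e) (x e) (t e)"
    using shift(1) less(1) by (intro marg_mono[OF reg(1)]) auto
  moreover have "marg (C g) (x g + 1) (t g) \<le> marg (C g) (y g) (t' g)"
    using shift(2) less(2) by (intro marg_mono[OF reg(2)]) auto
  moreover have "total_cost E C t x \<le> total_cost E C t (transfer x e g)"
    using ox xB by (simp add: optimal_sol_def)
  moreover have "total_cost E C t (transfer x e g)
      = total_cost E C t x - marg (C e) (x e) (t e) + marg (C g) (x g + 1) (t g)"
    using less(1) by (intro total_cost_transfer[OF fin \<open>e \<in> E\<close> \<open>g \<in> E\<close> \<open>e \<noteq> g\<close>]) simp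
  moreover have "total_cost E C t' (transfer y g e)
      = total_cost E C t' y - marg (C g) (y g) (t' g) + marg (C e) (y e + 1) (t' e)"
    using less(2) \<open>e \<noteq> g\<close>
    by (intro total_cost_transfer[OF fin \<open>g \<in> E\<close> \<open>e \<in> E\<close>]) simp_all
  ultimately have "total_cost E C t' (transfer y g e) \<le> total_cost E C t' y"
    by linarith
  then show ?thesis
    using oy yB unfolding optimal_sol_def by (meson order_trans)
qed

lemma l1dist_commute: "l1dist E x y = l1dist E y x"
  by (simp add: l1dist_def abs_minus_commute)

lemma l1dist_eq_double_excess:
  assumes "sum x E = sum y E"
  shows "l1dist E x y = 2 * (\<Sum>h\<in>E. x h - y h)"
proof -
  have "l1dist E x y = (\<Sum>h\<in>E. (x h - y h) + (y h - x h))"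
    unfolding l1dist_def by (rule sum.cong) auto
  moreover have "(\<Sum>h\<in>E. x h + (y h - x h)) = (\<Sum>h\<in>E. y h + (x h - y h))"
    by (rule sum.cong) auto
  ultimately show ?thesis
    using assms by (simp add: sum.distrib)
qed

lemma l1dist_transfer:
  assumes fin: "finite E" and "e \<in> E" "g \<in> E" "y e < x e" "x g < y g"
  shows "l1dist E x (transfer y g e) + 2 = l1dist E x y"
proof -
  let ?F = "\<lambda>h z. nat \<bar>int (x h) - int z\<bar>"
  have "e \<noteq> g"
    using assms(4,5) by auto
  have "(\<Sum>h\<in>E. ?F h ((y(g := y g - 1)) h)) + ?F g (y g) = (\<Sum>h\<in>E. ?F h (y h)) + ?F g (y g - 1)"
    using sum_comp_fun_upd[OF fin, of ?F y g "y g - 1"] assms(3) by simp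
  moreover have "(\<Sum>h\<in>E. ?F h (transfer y g e h)) + ?F e (y e)
      = (\<Sum>h\<in>E. ?F h ((y(g := y g - 1)) h)) + ?F e (y e + 1)"
    using sum_comp_fun_upd[OF fin, of ?F "y(g := y g - 1)" e "y e + 1"] assms(2) \<open>e \<noteq> g\<close>
    by (simp add: transfer_def)
  moreover have "?F e (y e) = ?F e (y e + 1) + 1" "?F g (y g) = ?F g (y g - 1) + 1"
    using assms(4,5) by auto
  ultimately show ?thesis
    unfolding l1dist_def by simp
qed

lemma sum_ge_2_obtain:
  fixes F :: "'a \<Rightarrow> nat"
  assumes "finite A" "2 \<le> sum F A"
  obtains h where "h \<in> A" "0 < F h" "h = a \<Longrightarrow> 2 \<le> F h"
proof (rule ccontr)
  assume "\<not> thesis"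
  note witness = that
  have "F h \<le> of_bool (h = a)" if h: "h \<in> A" for h
  proof (cases "h = a")
    case True
    then have "\<not> 2 \<le> F h"
      using witness[OF h] \<open>\<not> thesis\<close> by force
    then show ?thesis
      using True by simp
  next
    case False
    then have "\<not> 0 < F h"
      using witness[OF h] \<open>\<not> thesis\<close> by blast
    then show ?thesis
      by simp
  qed
  then have "sum F A \<le> (\<Sum>h\<in>A. of_bool (h = a))"
    by (rule sum_mono)
  also have "\<dots> \<le> 1"
    using assms(1) by (simp add: of_bool_def sum.If_cases)
  finally show False
    using assms(2) by simp
qed

subsection \<open>Stability of optimal solutions\<close>

lemma exchange_pair:
  assumes fin: "finite E" and pm: "polymatroid_rank E f"
    and x: "x \<in> base_set E f d" and y: "y \<in> base_set E f d" and far: "2 < l1dist E x y"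
    and "a \<in> E" and step: "t' a = t a + 1 \<or> t a = t' a + 1"
    and same: "\<forall>h\<in>E. h \<noteq> a \<longrightarrow> t' h = t h"
  shows "\<exists>e\<in>E. \<exists>g\<in>E. y e < x e \<and> x g < y g
           \<and> transfer x e g \<in> base_set E f d \<and> transfer y g e \<in> base_set E f d
           \<and> y e + 1 + t' e \<le> x e + t e \<and> x g + 1 + t g \<le> y g + t' g"
proof -
  have "sum x E = sum y E"
    using x y by (simp add: base_set_def)
  then have excess: "2 \<le> (\<Sum>h\<in>E. x h - y h)" "2 \<le> (\<Sum>h\<in>E. y h - x h)"
    using far l1dist_eq_double_excess[of x E y] l1dist_eq_double_excess[of y E x]
    by (auto simp: l1dist_commute)
  from step show ?thesis
  proof
    assume up: "t' a = t a + 1"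
    obtain e where e: "e \<in> E" "0 < x e - y e" "e = a \<Longrightarrow> 2 \<le> x e - y e"
      using sum_ge_2_obtain[OF fin excess(1), where a = a] by blast
    moreover have "y e < x e"
      using e(2) by simp
    ultimately obtain g where g: "g \<in> E" "x g < y g" "transfer x e g \<in> base_set E f d"
        "transfer y g e \<in> base_set E f d"
      using strong_exchange[OF fin pm x y] by blast
    have "y e + 1 + t' e \<le> x e + t e"
      using e same up by (cases "e = a") simp_all
    moreover have "x g + 1 + t g \<le> y g + t' g"
      using g same up by (cases "g = a") simp_all
    ultimately show ?thesis
      using \<open>e \<in> E\<close> \<open>y e < x e\<close> g by blast
  next
    assume down: "t a = t' a + 1"
    obtain g where g: "g \<in> E" "0 < y g - x g" "g = a \<Longrightarrow> 2 \<le> y g - x g"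
      using sum_ge_2_obtain[OF fin excess(2), where a = a] by blast
    moreover have "x g < y g"
      using g(2) by simp
    ultimately obtain e where e: "e \<in> E" "y e < x e" "transfer y g e \<in> base_set E f d"
        "transfer x e g \<in> base_set E f d"
      using strong_exchange[OF fin pm y x] by blast
    have "y e + 1 + t' e \<le> x e + t e"
      using e same down by (cases "e = a") simp_all
    moreover have "x g + 1 + t g \<le> y g + t' g"
      using g same down by (cases "g = a") simp_all
    ultimately show ?thesis
      using \<open>g \<in> E\<close> \<open>x g < y g\<close> e by blast
  qed
qed

lemma nearest_optimal_l1dist_le_2:
  assumes fin: "finite E" and pm: "polymatroid_rank E f" and reg: "\<forall>e\<in>E. regular (C e)"
    and ox: "optimal_sol E f C t d x" and oy: "optimal_sol E f C t' d y"
    and "a \<in> E" "t' a = t a + 1 \<or> t a = t' a + 1" "\<forall>h\<in>E. h \<noteq> a \<longrightarrow> t' h = t h"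
    and nearest: "\<forall>w. optimal_sol E f C t' d w \<longrightarrow> l1dist E x y \<le> l1dist E x w"
  shows "l1dist E x y \<le> 2"
proof (rule ccontr)
  assume "\<not> l1dist E x y \<le> 2"
  then have far: "2 < l1dist E x y"
    by simp
  have xB: "x \<in> base_set E f d" and yB: "y \<in> base_set E f d"
    using ox oy by (simp_all add: optimal_sol_def)
  obtain e g where eg: "e \<in> E" "g \<in> E" "y e < x e" "x g < y g"
      "transfer x e g \<in> base_set E f d" "transfer y g e \<in> base_set E f d"
      "y e + 1 + t' e \<le> x e + t e" "x g + 1 + t g \<le> y g + t' g"
    using exchange_pair[OF fin pm xB yB far assms(6-8)] by blast
  have "optimal_sol E f C t' d (transfer y g e)"
    using optimal_transfer[OF fin eg(1,2) bspec[OF reg eg(1)] bspec[OF reg eg(2)] ox oy eg(3-8)] .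
  then have "l1dist E x y \<le> l1dist E x (transfer y g e)"
    using nearest by blast
  moreover have "l1dist E x (transfer y g e) + 2 = l1dist E x y"
    using l1dist_transfer[OF fin eg(1-4)] .
  ultimately show False
    by linarith
qed

lemma finite_base_set:
  assumes "finite E"
  shows "finite (base_set E f d)"
proof -
  have "base_set E f d \<subseteq> {x. \<forall>h. (h \<in> E \<longrightarrow> x h \<in> {..d}) \<and> (h \<notin> E \<longrightarrow> x h = 0)}"
  proof
    fix x assume x: "x \<in> base_set E f d"
    have "x h \<le> d" if "h \<in> E" for h
      using x that member_le_sum[of h E x] assms by (simp add: base_set_def)
    then show "x \<in> {x. \<forall>h. (h \<in> E \<longrightarrow> x h \<in> {..d}) \<and> (h \<notin> E \<longrightarrow> x h = 0)}"
      using x by (auto simp: base_set_def natvecs_def)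
  qed
  then show ?thesis
    by (rule finite_subset) (intro finite_set_of_finite_funs assms finite_atMost)
qed

lemma optimal_sol_exists:
  assumes "finite E" "b \<in> base_set E f d"
  obtains x where "optimal_sol E f C t d x"
proof -
  obtain x where "is_arg_min (total_cost E C t) (\<lambda>x. x \<in> base_set E f d) x"
    using ex_is_arg_min_if_finite[OF finite_base_set[OF assms(1)]] assms(2) by blast
  then show thesis
    using that unfolding is_arg_min_def optimal_sol_def by (meson not_le)
qed

lemma l1dist_eq_1_unit_step:
  assumes "finite E" "l1dist E t t' = 1"
  obtains a where "a \<in> E" "t' a = t a + 1 \<or> t a = t' a + 1" "\<forall>h\<in>E. h \<noteq> a \<longrightarrow> t' h = t h"
proof -
  obtain a where "a \<in> E" "nat \<bar>int (t a) - int (t' a)\<bar> = 1"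
      "\<forall>h\<in>E. a \<noteq> h \<longrightarrow> nat \<bar>int (t h) - int (t' h)\<bar> = 0"
    using assms sum_eq_1_iff[of E] by (auto simp: l1dist_def)
  then show thesis
    using that by fastforce
qed

theorem corollary3p3:
  fixes E :: "'a set" and f :: "'a set \<Rightarrow> nat" and d :: nat
    and C :: "'a \<Rightarrow> nat \<Rightarrow> nat \<Rightarrow> real"
  assumes "finite E" and "E \<noteq> {}"
    and "polymatroid_rank E f"
    and "\<And>e x t. e \<in> E \<Longrightarrow> C e x t \<ge> 0"
    and "\<And>e. e \<in> E \<Longrightarrow> regular (C e)"
  shows "\<forall>t \<in> natvecs E. \<forall>x. optimal_sol E f C t d x \<longrightarrow>
           (\<forall>t' \<in> natvecs E. l1dist E t t' = 1 \<longrightarrow>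
              (\<exists>x'. optimal_sol E f C t' d x' \<and> l1dist E x x' \<le> 2))"
proof (intro ballI allI impI)
  fix t x t'
  assume ox: "optimal_sol E f C t d x" and "l1dist E t t' = 1"
  then obtain a where a: "a \<in> E" "t' a = t a + 1 \<or> t a = t' a + 1"
      "\<forall>h\<in>E. h \<noteq> a \<longrightarrow> t' h = t h"
    using l1dist_eq_1_unit_step assms(1) by blast
  have "x \<in> base_set E f d"
    using ox by (simp add: optimal_sol_def)
  then obtain z where "optimal_sol E f C t' d z"
    by (rule optimal_sol_exists[OF assms(1)])
  then obtain y where oy: "optimal_sol E f C t' d y"
      and nearest: "\<forall>w. optimal_sol E f C t' d w \<longrightarrow> l1dist E x y \<le> l1dist E x w"
    using ex_has_least_nat[of "optimal_sol E f C t' d" z "l1dist E x"] by blast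
  have "l1dist E x y \<le> 2"
    using nearest_optimal_l1dist_le_2[OF assms(1,3) _ ox oy a nearest] assms(5) by blast
  then show "\<exists>x'. optimal_sol E f C t' d x' \<and> l1dist E x x' \<le> 2"
    using oy by blast
qed

end
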